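(* Let $(A,P)$ be a $TD$-algebra and let $A_P$ be the vector space $A$ equipped with the (associative) product $a*_P b:=P(a)b+aP(b)-a\,P(1_A)\,b$. Then $P$ is a Nijenhuis operator for $*_P$, i.e. $P(a)*_P P(b)=P\bigl(P(a)*_P b+a*_P P(b)\bigr)-P^2(a*_P b)$ for all $a,b\in A$.
   Context: $\mathbb{K}$ is a field of characteristic $0$; algebras are associative unital $\mathbb{K}$-algebras (not necessarily commutative). A $TD$-algebra is a pair $(A,P)$ with $P:A\to A$ a $\mathbb{K}$-linear map satisfying the $TD$-relation $P(x)P(y)=P\bigl(P(x)y+xP(y)\bigr)-P\bigl(x\,P(1_A)\,y\bigr)$ for all $x,y\in A$. *)

theory Defs
  imports Main "HOL.Vector_Spaces"
begin

definition K_algebra :: "('k::field \<Rightarrow> 'a::ring_1 \<Rightarrow> 'a) \<Rightarrow> bool" where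
  "K_algebra scale \<longleftrightarrow> Vector_Spaces.vector_space scale \<and>
     (\<forall>c x y. scale c (x * y) = scale c x * y \<and> scale c (x * y) = x * scale c y)"

definition TD_operator :: "('k::field \<Rightarrow> 'a::ring_1 \<Rightarrow> 'a) \<Rightarrow> ('a \<Rightarrow> 'a) \<Rightarrow> bool" where
  "TD_operator scale P \<longleftrightarrow> Vector_Spaces.linear scale scale P \<and>
     (\<forall>x y. P x * P y = P (P x * y + x * P y) - P (x * P 1 * y))"

definition prodP :: "('a::ring_1 \<Rightarrow> 'a) \<Rightarrow> 'a \<Rightarrow> 'a \<Rightarrow> 'a" where
  "prodP P a b = P a * b + a * P b - a * P 1 * b"

definition Nijenhuis :: "('a::ab_group_add \<Rightarrow> 'a \<Rightarrow> 'a) \<Rightarrow> ('a \<Rightarrow> 'a) \<Rightarrow> bool" where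
  "Nijenhuis m P \<longleftrightarrow> (\<forall>a b. m (P a) (P b) = P (m (P a) b + m a (P b)) - P (P (m a b)))"

end

theory Submission
  imports Defs
begin

text \<open>Taking x = 1 or y = 1 in the
  TD-relation gives P(P y) = P 1 * P y and P(P x) = P x * P 1, and the TD-relation itself
  says that P is multiplicative from (A, *_P) to A. With these, both sides of the Nijenhuis
  identity reduce to P(P a) P b + P a P(P b) - P a P 1 P b.\<close>

locale TD_additive = additive P for P :: "'a::ring_1 \<Rightarrow> 'a" +
  assumes TD_relation: "P x * P y = P (P x * y + x * P y) - P (x * P 1 * y)"
begin

lemma P_P_eq_P1_mult: "P (P y) = P 1 * P y"
  using TD_relation [of 1 y] by (simp add: add)

lemma P_P_eq_mult_P1: "P (P x) = P x * P 1"
  using TD_relation [of x 1] by (simp add: add)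

lemma P_prodP_eq_mult: "P (prodP P a b) = P a * P b"
  unfolding prodP_def diff using TD_relation [of a b] by simp

lemma Nijenhuis_prodP: "Nijenhuis (prodP P) P"
  unfolding Nijenhuis_def
proof (intro allI)
  fix a b
  have "P (P (prodP P a b)) = P 1 * (P a * P b)"
    using P_P_eq_P1_mult [of "prodP P a b"] by (simp only: P_prodP_eq_mult)
  also have "\<dots> = P a * P 1 * P b"
    using P_P_eq_P1_mult [of a] P_P_eq_mult_P1 [of a] by (simp add: mult.assoc [symmetric])
  finally have "P (prodP P (P a) b + prodP P a (P b)) - P (P (prodP P a b))
      = P (P a) * P b + P a * P (P b) - P a * P 1 * P b"
    by (simp add: add P_prodP_eq_mult)
  then show "prodP P (P a) (P b) = P (prodP P (P a) b + prodP P a (P b)) - P (P (prodP P a b))"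
    by (simp add: prodP_def)
qed

end

theorem proposition3p5:
  fixes scale :: "'k::field_char_0 \<Rightarrow> 'a::ring_1 \<Rightarrow> 'a" and P :: "'a \<Rightarrow> 'a"
  assumes "K_algebra scale" and "TD_operator scale P"
  shows "Nijenhuis (prodP P) P"
proof -
  have "module_hom scale scale P"
    using assms(2) by (simp add: TD_operator_def linear_iff_module_hom)
  then interpret TD_additive P
    using assms(2) by unfold_locales (auto simp: TD_operator_def module_hom.add)
  show ?thesis
    by (rule Nijenhuis_prodP)
qed

end
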